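(* Under the standing assumptions with $d\ge1$, the following hold on $V$: (i) $E^*_0AE^*_0=a_0E^*_0$, where $a_0=\theta_0+\zeta_1(\theta^*_0-\theta^*_1)^{-1}$; (ii) $E_dA^*E_d=a^*_dE_d$, where $a^*_d=\theta^*_1-\dfrac{\zeta_1+(\theta^*_0-\theta^*_1)(\theta_0-\theta_{d-1})}{\theta_{d-1}-\theta_d}$.
   Context: Let $\mathbb F$ be an algebraically closed field, $d\ge0$, and $q,a,b,c,a^*,b^*,c^*\in\mathbb F$ with $q,b,c,b^*,c^*$ nonzero and $q^2\ne\pm1$. Put $\theta_i=a+bq^{2i-d}+cq^{d-2i}$ and $\theta^*_i=a^*+b^*q^{2i-d}+c^*q^{d-2i}$ ($0\le i\le d$), and assume $\theta_0,\dots,\theta_d$ are mutually distinct and $\theta^*_0,\dots,\theta^*_d$ are mutually distinct (this forces $q^{2i}\ne1$ for $1\le i\le d$). $U_q(\widehat{\mathfrak{sl}}_2)$ is the associative unital $\mathbb F$-algebra with generators $e_i^{\pm},K_i^{\pm1}$ ($i\in\{0,1\}$) and relations $K_iK_i^{-1}=K_i^{-1}K_i=1$, $K_0K_1=K_1K_0$, $K_ie_i^{\pm}K_i^{-1}=q^{\pm2}e_i^{\pm}$, $K_ie_j^{\pm}K_i^{-1}=q^{\mp2}e_j^{\pm}$ ($i\ne j$), $e_i^+e_i^--e_i^-e_i^+=(K_i-K_i^{-1})/(q-q^{-1})$, $e_0^{\pm}e_1^{\mp}=e_1^{\mp}e_0^{\pm}$, and the $q$-Serre relations $(e_i^\pm)^3e_j^\pm-[3]_q(e_i^\pm)^2e_j^\pm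 e_i^\pm+[3]_qe_i^\pm e_j^\pm(e_i^\pm)^2-e_j^\pm(e_i^\pm)^3=0$ ($i\ne j$), where $[3]_q=q^2+1+q^{-2}$. Tensor products of modules are formed via $e_i^+(v\otimes w)=e_i^+v\otimes K_iw+v\otimes e_i^+w$, $e_i^-(v\otimes w)=e_i^-v\otimes w+K_i^{-1}v\otimes e_i^-w$, $K_i(v\otimes w)=K_iv\otimes K_iw$. For nonzero $\alpha\in\mathbb F$, $V(\alpha)$ is the module with basis $x,y$ and $K_1x=qx$, $K_1y=q^{-1}y$, $e_1^-x=y$, $e_1^-y=0$, $e_1^+x=0$, $e_1^+y=x$, $K_0x=q^{-1}x$, $K_0y=qy$, $e_0^-x=0$, $e_0^-y=q\alpha^{-1}x$, $e_0^+x=q^{-1}\alpha y$, $e_0^+y=0$. $V=V(\alpha_1)\otimes\cdots\otimes V(\alpha_d)$ with nonzero $\alpha_i\in\mathbb F$. $U_0$ is the $1$-dimensional span of $x\otimes\cdots\otimes x$. Fix $u,v,u^*,v^*\in\mathbb F$ with $uv^*=-bb^*q^{-1}(q-q^{-1})^2$, $vu^*=-cc^*q^{-1}(q-q^{-1})^2$; set $R=ue_0^++ve_1^-K_1$, $L=u^*e_1^++v^*e_0^-K_0$, $A=a1+bK_0+cK_1+R$, $A^*=a^*1+b^*K_0+c^*K_1+L$, and $E_i=\prod_{0\le j\le d,\,j\ne i}(A-\theta_j1)/(\theta_i-\theta_j)$, $E^*_i=\prod_{0\le j\le d,\,j\ne i}(A^*-\theta^*_j1)/(\theta^*_i-\theta^*_j)$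 in $U_q(\widehat{\mathfrak{sl}}_2)$. $\zeta_1$ denotes the scalar by which $LR$ acts on $U_0$. *)

theory Defs
  imports "HOL-Computational_Algebra.Polynomial"
begin

text \<open>Generators of U_q(sl2-hat) (and the inverses of the K_i).
  Basis of V(alpha): True = x, False = y. Basis of V = V(alpha_1) (x) ... (x) V(alpha_d):
  words w :: bool list of length d (pure tensors of x,y). Operators on V are represented by
  matrices M :: bool list => bool list => 'a, where M w' w is the coefficient of
  the basis vector w' in M applied to the basis vector w.\<close>

datatype ugen = E0p | E0m | E1p | E1m | K0 | K1 | K0i | K1i

text \<open>Action of the generators on V(alpha): m1 q alpha g c b = coefficient of c in g.b\<close>
fun m1 :: "'a::field \<Rightarrow> 'a \<Rightarrow> ugen \<Rightarrow> bool \<Rightarrow> bool \<Rightarrow> 'a" where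
  "m1 q al K1 c b = (if c = b then (if b then q else inverse q) else 0)"
| "m1 q al K0 c b = (if c = b then (if b then inverse q else q) else 0)"
| "m1 q al K1i c b = (if c = b then (if b then inverse q else q) else 0)"
| "m1 q al K0i c b = (if c = b then (if b then q else inverse q) else 0)"
| "m1 q al E1m c b = (if b \<and> \<not> c then 1 else 0)"
| "m1 q al E1p c b = (if \<not> b \<and> c then 1 else 0)"
| "m1 q al E0m c b = (if \<not> b \<and> c then q * inverse al else 0)"
| "m1 q al E0p c b = (if b \<and> \<not> c then inverse q * al else 0)"

text \<open>Counit (action on the trivial 1-dimensional module = empty tensor product).\<close>
fun counit :: "ugen \<Rightarrow> 'a::field" where
  "counit K0 = 1" | "counit K1 = 1" | "counit K0i = 1" | "counit K1i = 1"
| "counit E0p = 0" | "counit E0m = 0" | "counit E1p = 0" | "counit E1m = 0"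

text \<open>Action of the generators on V(al_1) (x) (V(al_2) (x) ... (x) V(al_d)), using
  e_i^+ (v (x) w) = e_i^+ v (x) K_i w + v (x) e_i^+ w,
  e_i^- (v (x) w) = e_i^- v (x) w + K_i^{-1} v (x) e_i^- w,
  K (v (x) w) = K v (x) K w.\<close>
fun tm :: "'a::field \<Rightarrow> 'a list \<Rightarrow> ugen \<Rightarrow> bool list \<Rightarrow> bool list \<Rightarrow> 'a" where
  "tm q [] g [] [] = counit g"
| "tm q (al # als) g (c # w') (b # w) =
     (case g of
        E0p \<Rightarrow> m1 q al E0p c b * tm q als K0 w' w + (if c = b then tm q als E0p w' w else 0)
      | E1p \<Rightarrow> m1 q al E1p c b * tm q als K1 w' w + (if c = b then tm q als E1p w' w else 0)
      | E0m \<Rightarrow> m1 q al E0m c b * (if w' = w then 1 else 0) + m1 q al K0i c b * tm q als E0m w' w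
      | E1m \<Rightarrow> m1 q al E1m c b * (if w' = w then 1 else 0) + m1 q al K1i c b * tm q als E1m w' w
      | _ \<Rightarrow> m1 q al g c b * tm q als g w' w)"
| "tm q _ g _ _ = 0"

definition words :: "nat \<Rightarrow> bool list set" where
  "words d = {w. length w = d}"

definition omult :: "nat \<Rightarrow> (bool list \<Rightarrow> bool list \<Rightarrow> 'a::field) \<Rightarrow> (bool list \<Rightarrow> bool list \<Rightarrow> 'a)
    \<Rightarrow> (bool list \<Rightarrow> bool list \<Rightarrow> 'a)" where
  "omult d M N = (\<lambda>w'' w. \<Sum>w'\<in>words d. M w'' w' * N w' w)"

definition oid :: "bool list \<Rightarrow> bool list \<Rightarrow> 'a::field" where
  "oid = (\<lambda>w' w. if w' = w then 1 else 0)"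

definition opeq :: "nat \<Rightarrow> (bool list \<Rightarrow> bool list \<Rightarrow> 'a) \<Rightarrow> (bool list \<Rightarrow> bool list \<Rightarrow> 'a) \<Rightarrow> bool" where
  "opeq d M N \<longleftrightarrow> (\<forall>w' w. length w' = d \<longrightarrow> length w = d \<longrightarrow> M w' w = N w' w)"

definition Rop :: "'a::field \<Rightarrow> 'a list \<Rightarrow> 'a \<Rightarrow> 'a \<Rightarrow> bool list \<Rightarrow> bool list \<Rightarrow> 'a" where
  "Rop q als u v = (\<lambda>w' w. u * tm q als E0p w' w
      + v * omult (length als) (tm q als E1m) (tm q als K1) w' w)"

definition Lop :: "'a::field \<Rightarrow> 'a list \<Rightarrow> 'a \<Rightarrow> 'a \<Rightarrow> bool list \<Rightarrow> bool list \<Rightarrow> 'a" where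
  "Lop q als us vs = (\<lambda>w' w. us * tm q als E1p w' w
      + vs * omult (length als) (tm q als E0m) (tm q als K0) w' w)"

text \<open>A = a 1 + b K_0 + c K_1 + R on V  (also used for A* with starred data and L).\<close>
definition Aop :: "'a::field \<Rightarrow> 'a list \<Rightarrow> 'a \<Rightarrow> 'a \<Rightarrow> 'a \<Rightarrow> (bool list \<Rightarrow> bool list \<Rightarrow> 'a)
    \<Rightarrow> bool list \<Rightarrow> bool list \<Rightarrow> 'a" where
  "Aop q als a b c X = (\<lambda>w' w. a * oid w' w + b * tm q als K0 w' w + c * tm q als K1 w' w + X w' w)"

definition th :: "'a::field \<Rightarrow> nat \<Rightarrow> 'a \<Rightarrow> 'a \<Rightarrow> 'a \<Rightarrow> nat \<Rightarrow> 'a" where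
  "th q d a b c i = a + b * q powi (2 * int i - int d) + c * q powi (int d - 2 * int i)"

definition idem :: "nat \<Rightarrow> (bool list \<Rightarrow> bool list \<Rightarrow> 'a::field) \<Rightarrow> (nat \<Rightarrow> 'a) \<Rightarrow> nat
    \<Rightarrow> bool list \<Rightarrow> bool list \<Rightarrow> 'a" where
  "idem d M t i = foldr (\<lambda>j P. omult d (\<lambda>w' w. (M w' w - t j * oid w' w) / (t i - t j)) P)
       [j \<leftarrow> [0..<Suc d]. j \<noteq> i] oid"

end

theory Submission
  imports Defs
begin

text \<open>
  Grade the basis words of V by their number of y-factors (the weight).
  K_0 and K_1 act diagonally with eigenvalues depending only on the weight, so A acts as
  theta_n on weight n plus the raising part R, and A* as theta*_n plus the lowering part L.
  Hence E*_0 has range spanned by the top word x...x and E_d by the bottom word y...y.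
  A general sandwich lemma then computes P N P for such a rank-one idempotent P = E_i of M
  with range spanned by e: if M e = t_i e and M (N e) = t_k (N e) + kappa e, then
  P N P = kappa/(t_i - t_k) P.  At the top word (k = 1) kappa involves L R on x...x, i.e.
  zeta_1, which gives (i); at the bottom word (k = d-1) it involves R L on y...y.
\<close>

subsection \<open>Weights of basis words and the diagonal action of K_0, K_1\<close>

definition ycount :: "bool list \<Rightarrow> nat" where
  "ycount w = length (filter Not w)"

lemma ycount_simps [simp]:
  "ycount [] = 0" "ycount (True # w) = ycount w" "ycount (False # w) = Suc (ycount w)"
  by (auto simp: ycount_def)

lemma ycount_replicate [simp]: "ycount (replicate n True) = 0" "ycount (replicate n False) = n"
  by (induction n) auto

lemma ycount_le_length: "ycount w \<le> length w"
  unfolding ycount_def by simp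

lemma ycount_eq_0_iff: "ycount w = 0 \<longleftrightarrow> w = replicate (length w) True"
proof (induction w)
  case (Cons b w) then show ?case by (cases b) auto
qed simp

lemma ycount_eq_length_iff: "ycount w = length w \<longleftrightarrow> w = replicate (length w) False"
proof (induction w)
  case (Cons b w) then show ?case using ycount_le_length[of w] by (cases b) auto
qed simp

fun k0_eig :: "'a::field \<Rightarrow> bool list \<Rightarrow> 'a" where
  "k0_eig q [] = 1" | "k0_eig q (b # w) = (if b then inverse q else q) * k0_eig q w"

fun k1_eig :: "'a::field \<Rightarrow> bool list \<Rightarrow> 'a" where
  "k1_eig q [] = 1" | "k1_eig q (b # w) = (if b then q else inverse q) * k1_eig q w"

lemma tm_K0: "tm q als K0 w' w = (if w' = w \<and> length w = length als then k0_eig q w else 0)"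
  by (induction q als K0 w' w rule: tm.induct) auto

lemma tm_K1: "tm q als K1 w' w = (if w' = w \<and> length w = length als then k1_eig q w else 0)"
  by (induction q als K1 w' w rule: tm.induct) auto

lemma k0_eig_replicate [simp]:
  "k0_eig q (replicate m True) = inverse q ^ m" "k0_eig q (replicate m False) = q ^ m"
  by (induction m) auto

lemma k1_eig_replicate [simp]:
  "k1_eig q (replicate m True) = q ^ m" "k1_eig q (replicate m False) = inverse q ^ m"
  by (induction m) auto

lemma powi_pred: "(q::'a::field) \<noteq> 0 \<Longrightarrow> q powi (k - 1) = inverse q * q powi k"
  by (simp add: power_int_diff field_simps)

text \<open>The eigenvalues only depend on the weight; this makes A diagonal-plus-R.\<close>
lemma k0_eig_powi: "q \<noteq> 0 \<Longrightarrow> k0_eig q w = q powi (2 * int (ycount w) - int (length w))"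
proof (induction w)
  case (Cons b w)
  have weight_step: "2 * int (ycount (b # w)) - int (length (b # w))
      = (2 * int (ycount w) - int (length w)) + (if b then -1 else 1)"
    by (cases b) auto
  show ?case unfolding weight_step using Cons by (cases b) (simp_all add: power_int_add powi_pred)
qed simp

lemma k1_eig_powi: "q \<noteq> 0 \<Longrightarrow> k1_eig q w = q powi (int (length w) - 2 * int (ycount w))"
proof (induction w)
  case (Cons b w)
  have weight_step: "int (length (b # w)) - 2 * int (ycount (b # w))
      = (int (length w) - 2 * int (ycount w)) + (if b then 1 else -1)"
    by (cases b) auto
  show ?case unfolding weight_step using Cons by (cases b) (simp_all add: power_int_add powi_pred)
qed simp

lemma tm_raising:
  assumes "g = E0p \<or> g = E1m" and "tm q als g w' w \<noteq> 0"
    and "length w' = length als" and "length w = length als"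
  shows "ycount w' = Suc (ycount w)"
  using assms
proof (induction als arbitrary: w' w)
  case (Cons al als)
  then obtain c w1 b w2 where "w' = c # w1" "w = b # w2" by (cases w'; cases w) auto
  with Cons show ?case by (cases c; cases b; elim disjE) (auto simp: tm_K0 split: if_splits)
qed auto

lemma tm_lowering:
  assumes "g = E1p \<or> g = E0m" and "tm q als g w' w \<noteq> 0"
    and "length w' = length als" and "length w = length als"
  shows "ycount w = Suc (ycount w')"
  using assms
proof (induction als arbitrary: w' w)
  case (Cons al als)
  then obtain c w1 b w2 where "w' = c # w1" "w = b # w2" by (cases w'; cases w) auto
  with Cons show ?case by (cases c; cases b; elim disjE) (auto simp: tm_K1 split: if_splits)
qed auto

text \<open>Vectors of V are coordinate functions on the basis words of length d.\<close>
definition act :: "nat \<Rightarrow> (bool list \<Rightarrow> bool list \<Rightarrow> 'a::field) \<Rightarrow> (bool list \<Rightarrow> 'a)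
    \<Rightarrow> bool list \<Rightarrow> 'a" where
  "act d M z = (\<lambda>w'. \<Sum>w\<in>words d. M w' w * z w)"

definition vec_eq :: "nat \<Rightarrow> (bool list \<Rightarrow> 'a) \<Rightarrow> (bool list \<Rightarrow> 'a) \<Rightarrow> bool" where
  "vec_eq d z1 z2 \<longleftrightarrow> (\<forall>w\<in>words d. z1 w = z2 w)"

lemma finite_words [simp]: "finite (words d)"
  using finite_lists_length_eq[of "UNIV :: bool set" d] by (simp add: words_def)

lemma words_0: "words 0 = {[]}"
  by (auto simp: words_def)

lemma sum_words_Suc:
  "(\<Sum>w\<in>words (Suc m). f w) = (\<Sum>w\<in>words m. f (True # w)) + (\<Sum>w\<in>words m. f (False # w))"
proof -
  have "words (Suc m) = Cons True ` words m \<union> Cons False ` words m"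
    by (auto simp: words_def length_Suc_conv)
  then show ?thesis by (simp only:) (subst sum.union_disjoint; auto simp: sum.reindex)
qed

lemma replicate_in_words [simp]: "replicate d b \<in> words d"
  by (simp add: words_def)

lemma act_cong: "vec_eq d z1 z2 \<Longrightarrow> act d M z1 = act d M z2"
  unfolding act_def vec_eq_def by (intro ext sum.cong) auto

lemma act_linear: "act d M (\<lambda>w. x * z1 w + y * z2 w) w' = x * act d M z1 w' + y * act d M z2 w'"
  unfolding act_def by (simp add: sum.distrib sum_distrib_left algebra_simps)

lemma act_scale: "act d M (\<lambda>w. x * z w) w' = x * act d M z w'"
  unfolding act_def by (simp add: sum_distrib_left algebra_simps)

lemma act_basis: "w0 \<in> words d \<Longrightarrow> act d M (\<lambda>w. oid w w0) w' = M w' w0"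
  unfolding act_def oid_def by (simp add: if_distrib cong: if_cong)

lemma act_oid: "w \<in> words d \<Longrightarrow> act d oid z w = z w"
proof -
  assume w: "w \<in> words d"
  have "act d oid z w = (\<Sum>w1\<in>words d. if w = w1 then z w1 else 0)"
    unfolding act_def oid_def by (intro sum.cong) auto
  with w show ?thesis by simp
qed

lemma act_omult: "act d (omult d M N) z = act d M (act d N z)"
proof (rule ext)
  fix w'
  have "act d (omult d M N) z w' = (\<Sum>w\<in>words d. \<Sum>w1\<in>words d. M w' w1 * (N w1 w * z w))"
    unfolding act_def omult_def by (simp add: sum_distrib_right mult.assoc)
  also have "\<dots> = (\<Sum>w1\<in>words d. \<Sum>w\<in>words d. M w' w1 * (N w1 w * z w))"
    by (rule sum.swap)
  finally show "act d (omult d M N) z w' = act d M (act d N z) w'"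
    unfolding act_def by (simp add: sum_distrib_left)
qed

lemma omult_eq_act: "omult d M N w' w = act d M (\<lambda>x. N x w) w'"
  unfolding omult_def act_def by simp

subsection \<open>The idempotents as chains of Lagrange factors\<close>

definition idem_factor :: "nat \<Rightarrow> (bool list \<Rightarrow> bool list \<Rightarrow> 'a::field) \<Rightarrow> (nat \<Rightarrow> 'a)
    \<Rightarrow> nat \<Rightarrow> nat \<Rightarrow> (bool list \<Rightarrow> 'a) \<Rightarrow> bool list \<Rightarrow> 'a" where
  "idem_factor d M t i j z = (\<lambda>w'. (act d M z w' - t j * z w') / (t i - t j))"

definition idem_chain :: "nat \<Rightarrow> (bool list \<Rightarrow> bool list \<Rightarrow> 'a::field) \<Rightarrow> (nat \<Rightarrow> 'a)
    \<Rightarrow> nat \<Rightarrow> nat list \<Rightarrow> (bool list \<Rightarrow> 'a) \<Rightarrow> bool list \<Rightarrow> 'a" where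
  "idem_chain d M t i js z = foldr (idem_factor d M t i) js z"

definition lagrange_coeff :: "(nat \<Rightarrow> 'a::field) \<Rightarrow> nat \<Rightarrow> nat list \<Rightarrow> 'a \<Rightarrow> 'a" where
  "lagrange_coeff t i js x = prod_list (map (\<lambda>j. (x - t j) / (t i - t j)) js)"

lemma idem_chain_Cons: "idem_chain d M t i (j # js) z = idem_factor d M t i j (idem_chain d M t i js z)"
  by (simp add: idem_chain_def)

lemma idem_factor_cong: "vec_eq d z1 z2 \<Longrightarrow> vec_eq d (idem_factor d M t i j z1) (idem_factor d M t i j z2)"
  unfolding idem_factor_def using act_cong[of d z1 z2 M] by (auto simp: vec_eq_def)

lemma act_idem:
  assumes "w' \<in> words d"
  shows "act d (idem d M t i) z w' = idem_chain d M t i [j \<leftarrow> [0..<Suc d]. j \<noteq> i] z w'"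
proof -
  have factor: "act d (\<lambda>w' w. (M w' w - t j * oid w' w) / (t i - t j)) y w' = idem_factor d M t i j y w'"
    if "w' \<in> words d" for y j w'
  proof -
    have "act d (\<lambda>w' w. (M w' w - t j * oid w' w) / (t i - t j)) y w'
        = (act d M y w' - t j * act d oid y w') / (t i - t j)"
      unfolding act_def by (simp add: sum_divide_distrib[symmetric] sum_subtractf sum_distrib_left algebra_simps)
    then show ?thesis using act_oid[OF that, of y] by (simp add: idem_factor_def)
  qed
  have "act d (foldr (\<lambda>j P. omult d (\<lambda>w' w. (M w' w - t j * oid w' w) / (t i - t j)) P) js oid) z w'
      = idem_chain d M t i js z w'" if "w' \<in> words d" for js w'
    using that
  proof (induction js arbitrary: w')
    case Nil then show ?case by (simp add: idem_chain_def act_oid)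
  next
    case (Cons j js)
    have "vec_eq d (act d (foldr (\<lambda>j P. omult d (\<lambda>w' w. (M w' w - t j * oid w' w) / (t i - t j)) P) js oid) z)
        (idem_chain d M t i js z)"
      using Cons.IH by (simp add: vec_eq_def)
    from act_cong[OF this] Cons.prems show ?case
      by (simp add: act_omult idem_chain_Cons factor)
  qed
  then show ?thesis using assms unfolding idem_def .
qed

lemma lagrange_coeff_Cons:
  "lagrange_coeff t i (j # js) x = (x - t j) / (t i - t j) * lagrange_coeff t i js x"
  by (simp add: lagrange_coeff_def)

text \<open>Divided-difference update of the coefficients when one more factor is applied.\<close>
lemma divided_difference_step:
  fixes p0 p1 l0 l1 r g s u :: "'a::field"
  assumes "l0 \<noteq> l1"
  shows "(p1 * (l1 * r + g) + (p0 - p1) / (l0 - l1) * (l0 * g) - u * (p1 * r + (p0 - p1) / (l0 - l1) * g)) / s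
    = (l1 - u) / s * p1 * r + ((l0 - u) / s * p0 - (l1 - u) / s * p1) / (l0 - l1) * g"
proof (cases "s = 0")
  case False
  have "D \<noteq> 0 \<Longrightarrow> (p1 * (l1 * r + g) + (p0 - p1) / D * ((l1 + D) * g) - u * (p1 * r + (p0 - p1) / D * g)) / s
    = (l1 - u) / s * p1 * r + (((l1 + D) - u) / s * p0 - (l1 - u) / s * p1) / D * g" for D
    using False by (simp add: field_simps)
  from this[of "l0 - l1"] assms show ?thesis by simp
qed simp

lemma idem_chain_two_eigen:
  assumes r: "vec_eq d (act d M r) (\<lambda>w. l1 * r w + g w)"
    and g: "vec_eq d (act d M g) (\<lambda>w. l0 * g w)" and ne: "l0 \<noteq> l1"
  shows "vec_eq d (idem_chain d M t i js r) (\<lambda>w. lagrange_coeff t i js l1 * r w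
      + (lagrange_coeff t i js l0 - lagrange_coeff t i js l1) / (l0 - l1) * g w)"
proof (induction js)
  case Nil then show ?case by (simp add: idem_chain_def lagrange_coeff_def vec_eq_def)
next
  case (Cons j js)
  define a where "a = lagrange_coeff t i js l1"
  define b where "b = (lagrange_coeff t i js l0 - lagrange_coeff t i js l1) / (l0 - l1)"
  have IH: "vec_eq d (idem_chain d M t i js r) (\<lambda>w. a * r w + b * g w)"
    using Cons a_def b_def by simp
  have act_IH: "act d M (idem_chain d M t i js r) = act d M (\<lambda>w. a * r w + b * g w)"
    using IH by (rule act_cong)
  show ?case unfolding vec_eq_def
  proof
    fix w assume w: "w \<in> words d"
    have "idem_chain d M t i (j # js) r w
        = (a * (l1 * r w + g w) + b * (l0 * g w) - t j * (a * r w + b * g w)) / (t i - t j)"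
      using IH r g w unfolding idem_chain_Cons idem_factor_def act_IH act_linear
      by (simp add: vec_eq_def)
    also have "\<dots> = lagrange_coeff t i (j # js) l1 * r w
        + (lagrange_coeff t i (j # js) l0 - lagrange_coeff t i (j # js) l1) / (l0 - l1) * g w"
      unfolding lagrange_coeff_Cons a_def b_def by (rule divided_difference_step[OF ne])
    finally show "idem_chain d M t i (j # js) r w = lagrange_coeff t i (j # js) l1 * r w
        + (lagrange_coeff t i (j # js) l0 - lagrange_coeff t i (j # js) l1) / (l0 - l1) * g w" .
  qed
qed

lemma idem_factor_commute:
  "idem_factor d M t i j (idem_factor d M t i k z) w = idem_factor d M t i k (idem_factor d M t i j z) w"
proof -
  have act_factor: "act d M (idem_factor d M t i k z) w
      = (act d M (act d M z) w - t k * act d M z w) / (t i - t k)" for k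
    unfolding idem_factor_def act_def
    by (simp add: sum_divide_distrib[symmetric] sum_subtractf sum_distrib_left algebra_simps)
  have expand: "((P - a * Q) / sa - b * ((Q - a * Z) / sa)) / sb
      = (P - a * Q - b * Q + a * b * Z) / (sa * sb)" for P Q Z a b sa sb :: 'a
    by (cases "sa = 0"; cases "sb = 0") (simp_all add: field_simps)
  show ?thesis
    unfolding idem_factor_def[of d M t i j "idem_factor d M t i k z"]
      idem_factor_def[of d M t i k "idem_factor d M t i j z"] act_factor
    unfolding idem_factor_def expand by (simp add: algebra_simps)
qed

lemma idem_factor_chain_commute:
  "vec_eq d (idem_factor d M t i j (idem_chain d M t i ks z)) (idem_chain d M t i ks (idem_factor d M t i j z))"
proof (induction ks)
  case (Cons k ks)
  then have "vec_eq d (idem_factor d M t i k (idem_factor d M t i j (idem_chain d M t i ks z)))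
      (idem_factor d M t i k (idem_chain d M t i ks (idem_factor d M t i j z)))"
    by (rule idem_factor_cong)
  then show ?case by (simp add: vec_eq_def idem_chain_Cons idem_factor_commute)
qed (simp add: vec_eq_def idem_chain_def)

lemma idem_chain_rev: "vec_eq d (idem_chain d M t i (rev js) z) (idem_chain d M t i js z)"
proof (induction js arbitrary: z)
  case Nil then show ?case by (simp add: vec_eq_def)
next
  case (Cons j js)
  have "idem_chain d M t i (rev (j # js)) z = idem_chain d M t i (rev js) (idem_factor d M t i j z)"
    by (simp add: idem_chain_def)
  with Cons[of "idem_factor d M t i j z"] idem_factor_chain_commute[of d M t i j js z] show ?case
    by (simp add: vec_eq_def idem_chain_Cons)
qed

subsection \<open>Weight-graded operators and the range of the extremal idempotents\<close>

definition diag_plus :: "nat \<Rightarrow> (bool list \<Rightarrow> bool list \<Rightarrow> 'a::field) \<Rightarrow> (nat \<Rightarrow> 'a)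
    \<Rightarrow> (bool list \<Rightarrow> bool list \<Rightarrow> 'a) \<Rightarrow> bool" where
  "diag_plus d M t N \<longleftrightarrow> (\<forall>z. \<forall>w\<in>words d. act d M z w = t (ycount w) * z w + act d N z w)"

definition raising :: "nat \<Rightarrow> (bool list \<Rightarrow> bool list \<Rightarrow> 'a::zero) \<Rightarrow> bool" where
  "raising d N \<longleftrightarrow> (\<forall>w'\<in>words d. \<forall>w\<in>words d. N w' w \<noteq> 0 \<longrightarrow> ycount w' = Suc (ycount w))"

definition lowering :: "nat \<Rightarrow> (bool list \<Rightarrow> bool list \<Rightarrow> 'a::zero) \<Rightarrow> bool" where
  "lowering d N \<longleftrightarrow> (\<forall>w'\<in>words d. \<forall>w\<in>words d. N w' w \<noteq> 0 \<longrightarrow> ycount w = Suc (ycount w'))"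

lemma ycount_words_le: "w \<in> words d \<Longrightarrow> ycount w \<le> d"
  using ycount_le_length[of w] by (simp add: words_def)

lemma idem_factor_lowering:
  assumes M: "diag_plus d M t N" and N: "lowering d N"
    and z: "\<forall>w\<in>words d. Suc k \<le> ycount w \<longrightarrow> z w = 0"
  shows "\<forall>w\<in>words d. k \<le> ycount w \<longrightarrow> idem_factor d M t i k z w = 0"
proof (intro ballI impI)
  fix w assume w: "w \<in> words d" and k: "k \<le> ycount w"
  have "act d N z w = 0" unfolding act_def
    by (rule sum.neutral) (use N z w k in \<open>fastforce simp: lowering_def\<close>)
  then show "idem_factor d M t i k z w = 0" using M w z k
    by (cases "ycount w = k") (auto simp: idem_factor_def diag_plus_def)
qed

lemma idem_factor_raising:
  assumes M: "diag_plus d M t N" and N: "raising d N"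
    and z: "\<forall>w\<in>words d. ycount w < k \<longrightarrow> z w = 0"
  shows "\<forall>w\<in>words d. ycount w < Suc k \<longrightarrow> idem_factor d M t i k z w = 0"
proof (intro ballI impI)
  fix w assume w: "w \<in> words d" and k: "ycount w < Suc k"
  have "act d N z w = 0" unfolding act_def
    by (rule sum.neutral) (use N z w k in \<open>fastforce simp: raising_def\<close>)
  then show "idem_factor d M t i k z w = 0" using M w z k
    by (cases "ycount w = k") (auto simp: idem_factor_def diag_plus_def)
qed

lemma idem_chain_lowering:
  assumes M: "diag_plus d M t N" and N: "lowering d N" and k: "k \<le> Suc d"
  shows "\<forall>w\<in>words d. k \<le> ycount w \<longrightarrow> idem_chain d M t i [k..<Suc d] z w = 0"
  using k
proof (induction k rule: inc_induct)
  case base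
  show ?case using ycount_words_le by fastforce
next
  case (step n)
  then have "[n..<Suc d] = n # [Suc n..<Suc d]" by (simp add: upt_conv_Cons)
  with idem_factor_lowering[OF M N step.IH] show ?case by (simp add: idem_chain_Cons)
qed

lemma idem_chain_raising:
  assumes M: "diag_plus d M t N" and N: "raising d N"
  shows "\<forall>w\<in>words d. ycount w < k \<longrightarrow> idem_chain d M t i (rev [0..<k]) z w = 0"
proof (induction k)
  case (Suc k)
  from idem_factor_raising[OF M N Suc.IH] show ?case by (simp add: idem_chain_def)
qed simp

lemma idem_top_range:
  assumes M: "diag_plus d M t N" and N: "lowering d N"
    and w: "w \<in> words d" "w \<noteq> replicate d True"
  shows "act d (idem d M t 0) z w = 0"
proof -
  have "[j \<leftarrow> [0..<Suc d]. j \<noteq> 0] = [1..<Suc d]"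
    by (simp add: upt_conv_Cons filter_id_conv del: upt_Suc)
  moreover have "1 \<le> ycount w"
    using w ycount_eq_0_iff[of w] by (auto simp: words_def)
  ultimately show ?thesis
    using idem_chain_lowering[OF M N, of 1 0 z] w by (simp add: act_idem)
qed

lemma idem_bottom_range:
  assumes M: "diag_plus d M t N" and N: "raising d N"
    and w: "w \<in> words d" "w \<noteq> replicate d False"
  shows "act d (idem d M t d) z w = 0"
proof -
  have "[j \<leftarrow> [0..<Suc d]. j \<noteq> d] = [0..<d]"
    by (simp add: filter_id_conv)
  moreover have "ycount w < d"
    using w ycount_eq_length_iff[of w] ycount_words_le[of w d] by (auto simp: words_def)
  ultimately show ?thesis
    using idem_chain_raising[OF M N, of d d z] idem_chain_rev[of d M t d "[0..<d]" z] w
    by (simp add: act_idem vec_eq_def)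
qed

subsection \<open>Sandwiching an operator between an idempotent of rank one\<close>

text \<open>If M g = t_i g and M r = t_k r + g with k different from i, then E_i r = g/(t_i - t_k):
  the Lagrange polynomial of E_i vanishes at t_k and its divided difference is 1/(t_i - t_k).\<close>
lemma idem_two_step:
  assumes r: "vec_eq d (act d M r) (\<lambda>w. t k * r w + g w)"
    and g: "vec_eq d (act d M g) (\<lambda>w. t i * g w)"
    and inj: "inj_on t {0..d}" and ik: "i \<le> d" "k \<le> d" "k \<noteq> i"
  shows "vec_eq d (act d (idem d M t i) r) (\<lambda>w. g w / (t i - t k))"
proof -
  define js where "js = [j \<leftarrow> [0..<Suc d]. j \<noteq> i]"
  have t_ne: "t i \<noteq> t j" if "j \<le> d" "j \<noteq> i" for j
    using inj_onD[OF inj, of i j] ik that by auto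
  have "k \<in> set js" using ik by (auto simp: js_def)
  then have at_tk: "lagrange_coeff t i js (t k) = 0"
    unfolding lagrange_coeff_def prod_list_zero_iff by force
  have "map (\<lambda>j. (t i - t j) / (t i - t j)) js = map (\<lambda>_. 1) js"
    by (rule map_cong) (use t_ne in \<open>auto simp: js_def simp del: upt_Suc\<close>)
  then have at_ti: "lagrange_coeff t i js (t i) = 1"
    by (simp add: lagrange_coeff_def map_replicate_const)
  have "vec_eq d (idem_chain d M t i js r) (\<lambda>w. lagrange_coeff t i js (t k) * r w
      + (lagrange_coeff t i js (t i) - lagrange_coeff t i js (t k)) / (t i - t k) * g w)"
    using idem_chain_two_eigen[OF r g] t_ne ik by simp
  moreover have "act d (idem d M t i) r w = idem_chain d M t i js r w" if "w \<in> words d" for w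
    unfolding js_def using that by (rule act_idem)
  ultimately show ?thesis by (simp add: vec_eq_def at_tk at_ti)
qed

lemma idem_sandwich:
  fixes M N :: "bool list \<Rightarrow> bool list \<Rightarrow> 'a::field"
  assumes w0: "w0 \<in> words d"
    and range: "\<And>z w. w \<in> words d \<Longrightarrow> w \<noteq> w0 \<Longrightarrow> act d (idem d M t i) z w = 0"
    and eig: "vec_eq d (act d M (\<lambda>w. oid w w0)) (\<lambda>w. t i * oid w w0)"
    and step: "vec_eq d (act d M (act d N (\<lambda>w. oid w w0)))
                 (\<lambda>w. t k * act d N (\<lambda>w. oid w w0) w + \<kappa> * oid w w0)"
    and inj: "inj_on t {0..d}" and ik: "i \<le> d" "k \<le> d" "k \<noteq> i"
  shows "opeq d (omult d (omult d (idem d M t i) N) (idem d M t i))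
           (\<lambda>w' w. \<kappa> / (t i - t k) * idem d M t i w' w)"
  unfolding opeq_def
proof (intro allI impI)
  define P where "P = idem d M t i"
  define e where "e = (\<lambda>w. oid w w0 :: 'a)"
  fix w' w :: "bool list" assume "length w' = d" "length w = d"
  then have w': "w' \<in> words d" and w: "w \<in> words d" by (auto simp: words_def)
  have "vec_eq d (act d M (\<lambda>w. \<kappa> * e w)) (\<lambda>w. t i * (\<kappa> * e w))"
    using eig by (simp add: vec_eq_def act_scale e_def)
  from idem_two_step[OF _ this inj ik] step
  have image: "vec_eq d (act d P (act d N e)) (\<lambda>w. \<kappa> / (t i - t k) * e w)"
    by (simp add: P_def e_def)
  have col: "vec_eq d (\<lambda>x. P x w) (\<lambda>x. P w0 w * e x)" unfolding vec_eq_def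
  proof
    fix x assume x: "x \<in> words d"
    show "P x w = P w0 w * e x"
    proof (cases "x = w0")
      case False
      have "P x w = act d P (\<lambda>y. oid y w) x" using act_basis[OF w] by (rule sym)
      also have "\<dots> = 0" using range[OF x False] by (simp add: P_def)
      finally show ?thesis using False by (simp add: e_def oid_def)
    qed (simp add: e_def oid_def)
  qed
  have "act d N (\<lambda>x. P w0 w * e x) = (\<lambda>y. P w0 w * act d N e y)"
    by (rule ext) (rule act_scale)
  then have "omult d (omult d P N) P w' w = P w0 w * act d P (act d N e) w'"
    unfolding omult_eq_act act_omult act_cong[OF col] by (simp add: act_scale)
  also have "\<dots> = \<kappa> / (t i - t k) * P w' w"
    using image col w' by (simp add: vec_eq_def)
  finally show "omult d (omult d P N) P w' w = \<kappa> / (t i - t k) * P w' w"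
    unfolding P_def .
qed

lemma extremal_two_step:
  fixes M K N J :: "bool list \<Rightarrow> bool list \<Rightarrow> 'a::field"
  assumes M: "diag_plus d M t K" and N: "diag_plus d N s J" and w0: "w0 \<in> words d"
    and K_kills: "\<And>w. w \<in> words d \<Longrightarrow> K w w0 = 0"
    and J_next: "\<And>w. w \<in> words d \<Longrightarrow> J w w0 \<noteq> 0 \<Longrightarrow> ycount w = k"
    and KJ: "\<And>w. w \<in> words d \<Longrightarrow> omult d K J w w0 = \<zeta> * oid w w0"
  shows "vec_eq d (act d M (\<lambda>w. oid w w0)) (\<lambda>w. t (ycount w0) * oid w w0)"
    and "vec_eq d (act d M (act d N (\<lambda>w. oid w w0)))
           (\<lambda>w. t k * act d N (\<lambda>w. oid w w0) w + ((t (ycount w0) - t k) * s (ycount w0) + \<zeta>) * oid w w0)"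
proof -
  define e where "e = (\<lambda>w. oid w w0 :: 'a)"
  have diag: "f (ycount w) * e w = f (ycount w0) * e w" for f :: "nat \<Rightarrow> 'a" and w
    by (simp add: e_def oid_def)
  have Ke: "act d K e w = 0" if "w \<in> words d" for w
    using act_basis[OF w0, of K w] K_kills[OF that] by (simp add: e_def)
  show "vec_eq d (act d M (\<lambda>w. oid w w0)) (\<lambda>w. t (ycount w0) * oid w w0)"
    using M Ke diag by (simp add: vec_eq_def diag_plus_def e_def)
  have Ne: "act d N e w = s (ycount w0) * e w + J w w0" if "w \<in> words d" for w
    using N that act_basis[OF w0, of J w] diag[of s w] by (simp add: diag_plus_def e_def)
  have act_Ne: "act d K (act d N e) = act d K (\<lambda>w. s (ycount w0) * e w + 1 * J w w0)"
    using Ne by (intro act_cong) (simp add: vec_eq_def)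
  have KNe: "act d K (act d N e) w = \<zeta> * e w" if "w \<in> words d" for w
  proof -
    have "act d K (act d N e) w = s (ycount w0) * act d K e w + 1 * act d K (\<lambda>x. J x w0) w"
      unfolding act_Ne act_linear ..
    then show ?thesis using Ke[OF that] KJ[OF that] by (simp add: omult_eq_act e_def)
  qed
  text \<open>N e has weight components ycount w0 (along e) and k only.\<close>
  have weights: "t (ycount w) * act d N e w = t k * act d N e w + (t (ycount w0) - t k) * s (ycount w0) * e w"
    if "w \<in> words d" for w
  proof (cases "J w w0 = 0")
    case True then show ?thesis using Ne[OF that] by (simp add: e_def oid_def algebra_simps)
  next
    case False then show ?thesis using Ne[OF that] J_next[OF that] by (auto simp: e_def oid_def algebra_simps)
  qed
  show "vec_eq d (act d M (act d N (\<lambda>w. oid w w0)))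
      (\<lambda>w. t k * act d N (\<lambda>w. oid w w0) w + ((t (ycount w0) - t k) * s (ycount w0) + \<zeta>) * oid w w0)"
    using M KNe weights unfolding e_def by (simp add: vec_eq_def diag_plus_def algebra_simps)
qed

lemma extremal_sandwich:
  fixes M K N J :: "bool list \<Rightarrow> bool list \<Rightarrow> 'a::field"
  assumes M: "diag_plus d M t K" and N: "diag_plus d N s J"
    and w0: "w0 \<in> words d" "ycount w0 = i"
    and range: "\<And>z w. w \<in> words d \<Longrightarrow> w \<noteq> w0 \<Longrightarrow> act d (idem d M t i) z w = 0"
    and K_kills: "\<And>w. w \<in> words d \<Longrightarrow> K w w0 = 0"
    and J_next: "\<And>w. w \<in> words d \<Longrightarrow> J w w0 \<noteq> 0 \<Longrightarrow> ycount w = k"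
    and KJ: "\<And>w. w \<in> words d \<Longrightarrow> omult d K J w w0 = \<zeta> * oid w w0"
    and inj: "inj_on t {0..d}" and k: "k \<le> d" "k \<noteq> i"
  shows "opeq d (omult d (omult d (idem d M t i) N) (idem d M t i))
           (\<lambda>w' w. (s i + \<zeta> / (t i - t k)) * idem d M t i w' w)"
proof -
  have i: "i \<le> d" using w0 ycount_words_le by blast
  have "t i \<noteq> t k" using inj_onD[OF inj, of i k] i k by auto
  then have scalar: "((t i - t k) * s i + \<zeta>) / (t i - t k) = s i + \<zeta> / (t i - t k)"
    by (simp add: field_simps)
  note two_step = extremal_two_step[OF M N w0(1) K_kills J_next KJ, unfolded w0(2)]
  show ?thesis using idem_sandwich[OF w0(1) range two_step inj i k] unfolding scalar .
qed

lemma top_sandwich: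
  fixes A R As L :: "bool list \<Rightarrow> bool list \<Rightarrow> 'a::field"
  assumes A: "diag_plus d A t R" and R: "raising d R"
    and As: "diag_plus d As s L" and L: "lowering d L"
    and inj: "inj_on s {0..d}" and d: "1 \<le> d"
    and zeta: "\<And>w. w \<in> words d \<Longrightarrow> omult d L R w (replicate d True) = \<zeta> * oid w (replicate d True)"
  shows "opeq d (omult d (omult d (idem d As s 0) A) (idem d As s 0))
           (\<lambda>w' w. (t 0 + \<zeta> / (s 0 - s 1)) * idem d As s 0 w' w)"
proof (rule extremal_sandwich[OF As A _ _ idem_top_range[OF As L] _ _ zeta inj d])
  show "\<And>w. w \<in> words d \<Longrightarrow> L w (replicate d True) = 0"
    using L by (force simp: lowering_def)
  show "\<And>w. w \<in> words d \<Longrightarrow> R w (replicate d True) \<noteq> 0 \<Longrightarrow> ycount w = 1"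
    using R by (force simp: raising_def)
qed simp_all

lemma bottom_sandwich:
  fixes A R As L :: "bool list \<Rightarrow> bool list \<Rightarrow> 'a::field"
  assumes A: "diag_plus d A t R" and R: "raising d R"
    and As: "diag_plus d As s L" and L: "lowering d L"
    and inj: "inj_on t {0..d}" and d: "1 \<le> d"
  shows "opeq d (omult d (omult d (idem d A t d) As) (idem d A t d))
           (\<lambda>w' w. (s d + omult d R L (replicate d False) (replicate d False) / (t d - t (d - 1)))
                     * idem d A t d w' w)"
proof (rule extremal_sandwich[OF A As _ _ idem_bottom_range[OF A R] _ _ _ inj])
  let ?Y = "replicate d False"
  have weight_d: "w = ?Y" if "w \<in> words d" "ycount w = d" for w
    using that ycount_eq_length_iff[of w] by (simp add: words_def)
  show "\<And>w. w \<in> words d \<Longrightarrow> R w ?Y = 0"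
    using R ycount_words_le by (force simp: raising_def)
  show "\<And>w. w \<in> words d \<Longrightarrow> L w ?Y \<noteq> 0 \<Longrightarrow> ycount w = d - 1"
    using L by (force simp: lowering_def)
  text \<open>R L maps the bottom word to a multiple of itself: a path down and up returns to weight d.\<close>
  show "omult d R L w ?Y = omult d R L ?Y ?Y * oid w ?Y" if w: "w \<in> words d" for w
  proof (cases "w = ?Y")
    case False
    have "omult d R L w ?Y = 0" unfolding omult_def
    proof (rule sum.neutral, rule ballI, rule ccontr)
      fix x assume x: "x \<in> words d" "R w x * L x ?Y \<noteq> 0"
      have "L x ?Y \<noteq> 0" "R w x \<noteq> 0" using x(2) by auto
      then have "ycount ?Y = Suc (ycount x)" "ycount w = Suc (ycount x)"
        using L R w x(1) replicate_in_words unfolding lowering_def raising_def by blast+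
      then have "ycount w = d" by simp
      with weight_d[OF w] False show False by blast
    qed
    then show ?thesis using False by (simp add: oid_def)
  qed (simp add: oid_def)
qed (use d in simp_all)

subsection \<open>The operators A and A* on the tensor product are graded\<close>

lemma omult_K0:
  assumes "length als = d" and w: "w \<in> words d"
  shows "omult d M (tm q als K0) w' w = M w' w * k0_eig q w"
proof -
  have "omult d M (tm q als K0) w' w = (\<Sum>w1\<in>words d. if w1 = w then M w' w1 * k0_eig q w else 0)"
    unfolding omult_def using assms by (intro sum.cong) (auto simp: tm_K0 words_def)
  with w show ?thesis by simp
qed

lemma omult_K1:
  assumes "length als = d" and w: "w \<in> words d"
  shows "omult d M (tm q als K1) w' w = M w' w * k1_eig q w"
proof -
  have "omult d M (tm q als K1) w' w = (\<Sum>w1\<in>words d. if w1 = w then M w' w1 * k1_eig q w else 0)"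
    unfolding omult_def using assms by (intro sum.cong) (auto simp: tm_K1 words_def)
  with w show ?thesis by simp
qed

lemma Rop_eq: "length als = d \<Longrightarrow> w \<in> words d
    \<Longrightarrow> Rop q als u v w' w = u * tm q als E0p w' w + v * (tm q als E1m w' w * k1_eig q w)"
  unfolding Rop_def by (simp add: omult_K1)

lemma Lop_eq: "length als = d \<Longrightarrow> w \<in> words d
    \<Longrightarrow> Lop q als us vs w' w = us * tm q als E1p w' w + vs * (tm q als E0m w' w * k0_eig q w)"
  unfolding Lop_def by (simp add: omult_K0)

lemma Rop_raising:
  assumes len: "length als = d"
  shows "raising d (Rop q als u v)"
  unfolding raising_def
proof (intro ballI impI)
  fix w' w assume w: "w' \<in> words d" "w \<in> words d" and "Rop q als u v w' w \<noteq> 0"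
  then have "tm q als E0p w' w \<noteq> 0 \<or> tm q als E1m w' w \<noteq> 0" using len by (auto simp: Rop_eq)
  then show "ycount w' = Suc (ycount w)" using tm_raising[of _ q als w' w] len w by (auto simp: words_def)
qed

lemma Lop_lowering:
  assumes len: "length als = d"
  shows "lowering d (Lop q als us vs)"
  unfolding lowering_def
proof (intro ballI impI)
  fix w' w assume w: "w' \<in> words d" "w \<in> words d" and "Lop q als us vs w' w \<noteq> 0"
  then have "tm q als E1p w' w \<noteq> 0 \<or> tm q als E0m w' w \<noteq> 0" using len by (auto simp: Lop_eq)
  then show "ycount w = Suc (ycount w')" using tm_lowering[of _ q als w' w] len w by (auto simp: words_def)
qed

lemma Aop_diag_plus:
  assumes q: "q \<noteq> 0" and len: "length als = d"
  shows "diag_plus d (Aop q als a b c N) (th q d a b c) N"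
  unfolding diag_plus_def
proof (intro allI ballI)
  fix z w' assume w': "w' \<in> words d"
  have "act d (Aop q als a b c N) z w'
      = (\<Sum>w\<in>words d. (if w = w' then (a + b * k0_eig q w' + c * k1_eig q w') * z w' else 0) + N w' w * z w)"
    unfolding act_def Aop_def using len
    by (intro sum.cong) (auto simp: oid_def tm_K0 tm_K1 words_def algebra_simps)
  also have "\<dots> = (a + b * k0_eig q w' + c * k1_eig q w') * z w' + act d N z w'"
    using w' by (simp add: sum.distrib act_def)
  finally show "act d (Aop q als a b c N) z w' = th q d a b c (ycount w') * z w' + act d N z w'"
    using w' q len by (simp add: k0_eig_powi k1_eig_powi th_def words_def)
qed

subsection \<open>The actions of L R on the top word and of R L on the bottom word\<close>

text \<open>The q-integer [m]_q = (q^m - q^-m) / (q - q^-1).\<close>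
fun qint :: "'a::field \<Rightarrow> nat \<Rightarrow> 'a" where
  "qint q 0 = 0" | "qint q (Suc m) = inverse q * qint q m + q ^ m"

text \<open>The geometric sum q + q^-1 + ... + q^(3-2m).\<close>
fun qgeom :: "'a::field \<Rightarrow> nat \<Rightarrow> 'a" where
  "qgeom q 0 = 0" | "qgeom q (Suc m) = qgeom q m + q * inverse q ^ (2 * m)"

fun alpha_sum :: "'a::field \<Rightarrow> 'a list \<Rightarrow> 'a" where
  "alpha_sum q [] = 0"
| "alpha_sum q (al # als) = inverse q * alpha_sum q als + q ^ 2 * inverse al * inverse q ^ length als"

lemma qint_closed: "q \<noteq> 0 \<Longrightarrow> (q - inverse q) * qint q m = q ^ m - inverse q ^ m"
proof (induction m)
  case (Suc m)
  have "(q - inverse q) * qint q (Suc m) = inverse q * ((q - inverse q) * qint q m) + (q - inverse q) * q ^ m"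
    by (simp add: algebra_simps)
  also have "\<dots> = inverse q * (q ^ m - inverse q ^ m) + (q - inverse q) * q ^ m" using Suc by simp
  also have "\<dots> = q ^ Suc m - inverse q ^ Suc m" using Suc.prems by (simp add: algebra_simps)
  finally show ?case .
qed simp

lemma qgeom_closed: "q \<noteq> 0 \<Longrightarrow> (q - inverse q) * qgeom q m = q ^ 2 - q ^ 2 * inverse q ^ (2 * m)"
proof (induction m)
  case (Suc m)
  have "(q - inverse q) * qgeom q (Suc m) = (q - inverse q) * qgeom q m + (q - inverse q) * q * inverse q ^ (2 * m)"
    by (simp add: algebra_simps)
  also have "\<dots> = q ^ 2 - q ^ 2 * inverse q ^ (2 * m) + (q - inverse q) * q * inverse q ^ (2 * m)"
    using Suc by simp
  also have "\<dots> = q ^ 2 - q ^ 2 * inverse q ^ (2 * Suc m)" using Suc.prems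
    by (simp add: field_simps power2_eq_square)
  finally show ?case .
qed simp

lemma inverse_cancel_left: "(q::'a::field) \<noteq> 0 \<Longrightarrow> q * (inverse q * x) = x"
  by (simp add: mult.assoc[symmetric])

lemma sum_E1p_E0p_top:
  assumes "q \<noteq> 0"
  shows "(\<Sum>w\<in>words (length als). tm q als E1p (replicate (length als) True) w
            * tm q als E0p w (replicate (length als) True)) = (\<Sum>al\<leftarrow>als. al * inverse q)"
proof (induction als)
  case (Cons al als)
  let ?m = "length als" let ?X = "replicate ?m True"
  have "(\<Sum>w\<in>words ?m. tm q (al#als) E1p (True # ?X) (False # w) * tm q (al#als) E0p (False # w) (True # ?X))
      = (\<Sum>w\<in>words ?m. if w = ?X then k1_eig q ?X * (inverse q * al * k0_eig q ?X) else 0)"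
    by (intro sum.cong) (auto simp: tm_K0 tm_K1 words_def)
  also have "\<dots> = al * inverse q" using assms by (simp add: field_simps power_inverse)
  finally show ?case using Cons unfolding length_Cons sum_words_Suc replicate_Suc by simp
qed (simp add: words_0)

lemma sum_E1p_E1m_top:
  assumes "q \<noteq> 0"
  shows "(\<Sum>w\<in>words (length als). tm q als E1p (replicate (length als) True) w
            * tm q als E1m w (replicate (length als) True)) = qint q (length als)"
proof (induction als)
  case (Cons al als)
  let ?m = "length als" let ?X = "replicate ?m True"
  have "(\<Sum>w\<in>words ?m. tm q (al#als) E1p (True # ?X) (False # w) * tm q (al#als) E1m (False # w) (True # ?X))
      = (\<Sum>w\<in>words ?m. if w = ?X then k1_eig q ?X else 0)"
    by (intro sum.cong) (auto simp: tm_K0 tm_K1 words_def)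
  moreover have "(\<Sum>w\<in>words ?m. tm q (al#als) E1p (True # ?X) (True # w) * tm q (al#als) E1m (True # w) (True # ?X))
      = inverse q * (\<Sum>w\<in>words ?m. tm q als E1p ?X w * tm q als E1m w ?X)"
    by (simp add: sum_distrib_left algebra_simps)
  ultimately show ?case using Cons unfolding length_Cons sum_words_Suc replicate_Suc by simp
qed (simp add: words_0)

lemma sum_E0m_E0p_top:
  assumes "q \<noteq> 0" and "\<forall>al\<in>set als. al \<noteq> 0"
  shows "(\<Sum>w\<in>words (length als). tm q als E0m (replicate (length als) True) w * k0_eig q w
            * tm q als E0p w (replicate (length als) True)) = qgeom q (length als)"
  using assms(2)
proof (induction als)
  case (Cons al als)
  let ?m = "length als" let ?X = "replicate ?m True"
  have "(\<Sum>w\<in>words ?m. tm q (al#als) E0m (True # ?X) (False # w) * k0_eig q (False # w)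
          * tm q (al#als) E0p (False # w) (True # ?X))
      = (\<Sum>w\<in>words ?m. if w = ?X then (q * inverse al) * (q * k0_eig q ?X) * (inverse q * al * k0_eig q ?X) else 0)"
    by (intro sum.cong) (auto simp: tm_K0 tm_K1 words_def)
  also have "\<dots> = q * inverse q ^ (2 * ?m)"
    using assms Cons.prems by (simp add: field_simps power_mult power2_eq_square)
  moreover have "(\<Sum>w\<in>words ?m. tm q (al#als) E0m (True # ?X) (True # w) * k0_eig q (True # w)
          * tm q (al#als) E0p (True # w) (True # ?X))
      = (\<Sum>w\<in>words ?m. tm q als E0m ?X w * k0_eig q w * tm q als E0p w ?X)"
    using assms by (simp add: sum_distrib_left algebra_simps inverse_cancel_left)
  ultimately show ?case using Cons unfolding length_Cons sum_words_Suc replicate_Suc by simp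
qed (simp add: words_0)

lemma sum_E0m_E1m_top:
  assumes "q \<noteq> 0"
  shows "(\<Sum>w\<in>words (length als). tm q als E0m (replicate (length als) True) w * k0_eig q w
            * tm q als E1m w (replicate (length als) True)) = alpha_sum q als"
proof (induction als)
  case (Cons al als)
  let ?m = "length als" let ?X = "replicate ?m True"
  have "(\<Sum>w\<in>words ?m. tm q (al#als) E0m (True # ?X) (False # w) * k0_eig q (False # w)
          * tm q (al#als) E1m (False # w) (True # ?X))
      = (\<Sum>w\<in>words ?m. if w = ?X then (q * inverse al) * (q * k0_eig q ?X) else 0)"
    by (intro sum.cong) (auto simp: tm_K0 tm_K1 words_def)
  also have "\<dots> = q ^ 2 * inverse al * inverse q ^ ?m" by (simp add: power2_eq_square)
  moreover have "(\<Sum>w\<in>words ?m. tm q (al#als) E0m (True # ?X) (True # w) * k0_eig q (True # w)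
          * tm q (al#als) E1m (True # w) (True # ?X))
      = inverse q * (\<Sum>w\<in>words ?m. tm q als E0m ?X w * k0_eig q w * tm q als E1m w ?X)"
    using assms by (simp add: sum_distrib_left algebra_simps inverse_cancel_left)
  ultimately show ?case using Cons unfolding length_Cons sum_words_Suc replicate_Suc by simp
qed (simp add: words_0)

lemma sum_E0p_E1p_bottom:
  assumes "q \<noteq> 0"
  shows "(\<Sum>w\<in>words (length als). tm q als E0p (replicate (length als) False) w
            * tm q als E1p w (replicate (length als) False)) = (\<Sum>al\<leftarrow>als. al * inverse q)"
proof (induction als)
  case (Cons al als)
  let ?m = "length als" let ?Y = "replicate ?m False"
  have "(\<Sum>w\<in>words ?m. tm q (al#als) E0p (False # ?Y) (True # w) * tm q (al#als) E1p (True # w) (False # ?Y))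
      = (\<Sum>w\<in>words ?m. if w = ?Y then (inverse q * al * k0_eig q ?Y) * k1_eig q ?Y else 0)"
    by (intro sum.cong) (auto simp: tm_K0 tm_K1 words_def)
  also have "\<dots> = al * inverse q" using assms by (simp add: field_simps power_inverse)
  finally show ?case using Cons unfolding length_Cons sum_words_Suc replicate_Suc by simp
qed (simp add: words_0)

lemma sum_E0p_E0m_bottom:
  assumes "q \<noteq> 0" and "\<forall>al\<in>set als. al \<noteq> 0"
  shows "(\<Sum>w\<in>words (length als). tm q als E0p (replicate (length als) False) w
            * tm q als E0m w (replicate (length als) False)) = qint q (length als)"
  using assms(2)
proof (induction als)
  case (Cons al als)
  let ?m = "length als" let ?Y = "replicate ?m False"
  have "(\<Sum>w\<in>words ?m. tm q (al#als) E0p (False # ?Y) (True # w) * tm q (al#als) E0m (True # w) (False # ?Y))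
      = (\<Sum>w\<in>words ?m. if w = ?Y then (inverse q * al * k0_eig q ?Y) * (q * inverse al) else 0)"
    by (intro sum.cong) (auto simp: tm_K0 tm_K1 words_def)
  also have "\<dots> = q ^ ?m" using assms Cons.prems by (simp add: field_simps)
  moreover have "(\<Sum>w\<in>words ?m. tm q (al#als) E0p (False # ?Y) (False # w) * tm q (al#als) E0m (False # w) (False # ?Y))
      = inverse q * (\<Sum>w\<in>words ?m. tm q als E0p ?Y w * tm q als E0m w ?Y)"
    by (simp add: sum_distrib_left algebra_simps)
  ultimately show ?case using Cons unfolding length_Cons sum_words_Suc replicate_Suc by simp
qed (simp add: words_0)

lemma sum_E1m_E1p_bottom:
  assumes "q \<noteq> 0"
  shows "(\<Sum>w\<in>words (length als). tm q als E1m (replicate (length als) False) w * k1_eig q w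
            * tm q als E1p w (replicate (length als) False)) = qgeom q (length als)"
proof (induction als)
  case (Cons al als)
  let ?m = "length als" let ?Y = "replicate ?m False"
  have "(\<Sum>w\<in>words ?m. tm q (al#als) E1m (False # ?Y) (True # w) * k1_eig q (True # w)
          * tm q (al#als) E1p (True # w) (False # ?Y))
      = (\<Sum>w\<in>words ?m. if w = ?Y then (q * k1_eig q ?Y) * k1_eig q ?Y else 0)"
    by (intro sum.cong) (auto simp: tm_K0 tm_K1 words_def)
  also have "\<dots> = q * inverse q ^ (2 * ?m)" using assms by (simp add: field_simps power_mult power2_eq_square)
  moreover have "(\<Sum>w\<in>words ?m. tm q (al#als) E1m (False # ?Y) (False # w) * k1_eig q (False # w)
          * tm q (al#als) E1p (False # w) (False # ?Y))
      = (\<Sum>w\<in>words ?m. tm q als E1m ?Y w * k1_eig q w * tm q als E1p w ?Y)"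
    using assms by (simp add: sum_distrib_left algebra_simps inverse_cancel_left)
  ultimately show ?case using Cons unfolding length_Cons sum_words_Suc replicate_Suc by simp
qed (simp add: words_0)

lemma sum_E1m_E0m_bottom:
  assumes "q \<noteq> 0"
  shows "(\<Sum>w\<in>words (length als). tm q als E1m (replicate (length als) False) w * k1_eig q w
            * tm q als E0m w (replicate (length als) False)) = alpha_sum q als"
proof (induction als)
  case (Cons al als)
  let ?m = "length als" let ?Y = "replicate ?m False"
  have "(\<Sum>w\<in>words ?m. tm q (al#als) E1m (False # ?Y) (True # w) * k1_eig q (True # w)
          * tm q (al#als) E0m (True # w) (False # ?Y))
      = (\<Sum>w\<in>words ?m. if w = ?Y then (q * k1_eig q ?Y) * (q * inverse al) else 0)"
    by (intro sum.cong) (auto simp: tm_K0 tm_K1 words_def)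
  also have "\<dots> = q ^ 2 * inverse al * inverse q ^ ?m" by (simp add: power2_eq_square)
  moreover have "(\<Sum>w\<in>words ?m. tm q (al#als) E1m (False # ?Y) (False # w) * k1_eig q (False # w)
          * tm q (al#als) E0m (False # w) (False # ?Y))
      = inverse q * (\<Sum>w\<in>words ?m. tm q als E1m ?Y w * k1_eig q w * tm q als E0m w ?Y)"
    using assms by (simp add: sum_distrib_left algebra_simps inverse_cancel_left)
  ultimately show ?case using Cons unfolding length_Cons sum_words_Suc replicate_Suc by simp
qed (simp add: words_0)

lemma LR_top:
  assumes q: "q \<noteq> 0" and len: "length als = d" and al_nz: "\<forall>al\<in>set als. al \<noteq> 0"
  shows "omult d (Lop q als us vs) (Rop q als u v) (replicate d True) (replicate d True)
    = us * u * (\<Sum>al\<leftarrow>als. al * inverse q) + us * v * q ^ d * qint q d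
      + vs * u * qgeom q d + vs * v * q ^ d * alpha_sum q als"
proof -
  let ?X = "replicate d True"
  have "omult d (Lop q als us vs) (Rop q als u v) ?X ?X = (\<Sum>w\<in>words d.
      us * u * (tm q als E1p ?X w * tm q als E0p w ?X)
    + us * v * q ^ d * (tm q als E1p ?X w * tm q als E1m w ?X)
    + vs * u * (tm q als E0m ?X w * k0_eig q w * tm q als E0p w ?X)
    + vs * v * q ^ d * (tm q als E0m ?X w * k0_eig q w * tm q als E1m w ?X))"
    unfolding omult_def using len by (intro sum.cong) (auto simp: Lop_eq Rop_eq algebra_simps)
  also have "\<dots> = us * u * (\<Sum>al\<leftarrow>als. al * inverse q) + us * v * q ^ d * qint q d
      + vs * u * qgeom q d + vs * v * q ^ d * alpha_sum q als"
    using sum_E1p_E0p_top[OF q, of als] sum_E1p_E1m_top[OF q, of als]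
      sum_E0m_E0p_top[OF q al_nz] sum_E0m_E1m_top[OF q, of als] len
    by (simp add: sum.distrib sum_distrib_left[symmetric])
  finally show ?thesis .
qed

lemma RL_bottom:
  assumes q: "q \<noteq> 0" and len: "length als = d" and al_nz: "\<forall>al\<in>set als. al \<noteq> 0"
  shows "omult d (Rop q als u v) (Lop q als us vs) (replicate d False) (replicate d False)
    = u * us * (\<Sum>al\<leftarrow>als. al * inverse q) + u * vs * q ^ d * qint q d
      + v * us * qgeom q d + v * vs * q ^ d * alpha_sum q als"
proof -
  let ?Y = "replicate d False"
  have "omult d (Rop q als u v) (Lop q als us vs) ?Y ?Y = (\<Sum>w\<in>words d.
      u * us * (tm q als E0p ?Y w * tm q als E1p w ?Y)
    + u * vs * q ^ d * (tm q als E0p ?Y w * tm q als E0m w ?Y)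
    + v * us * (tm q als E1m ?Y w * k1_eig q w * tm q als E1p w ?Y)
    + v * vs * q ^ d * (tm q als E1m ?Y w * k1_eig q w * tm q als E0m w ?Y))"
    unfolding omult_def using len by (intro sum.cong) (auto simp: Lop_eq Rop_eq algebra_simps)
  also have "\<dots> = u * us * (\<Sum>al\<leftarrow>als. al * inverse q) + u * vs * q ^ d * qint q d
      + v * us * qgeom q d + v * vs * q ^ d * alpha_sum q als"
    using sum_E0p_E1p_bottom[OF q, of als] sum_E0p_E0m_bottom[OF q al_nz]
      sum_E1m_E1p_bottom[OF q, of als] sum_E1m_E0m_bottom[OF q, of als] len
    by (simp add: sum.distrib sum_distrib_left[symmetric])
  finally show ?thesis .
qed

subsection \<open>The eigenvalue identity relating R L on the bottom word to zeta_1\<close>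

lemma th_pow:
  assumes q: "q \<noteq> 0"
  shows "th q d a b c i = a + b * q ^ (2 * i) * inverse (q ^ d) + c * q ^ d * inverse (q ^ (2 * i))"
proof -
  have p: "q powi (int (2 * i)) = q ^ (2 * i)" "q powi (int d) = q ^ d"
    by (simp_all only: power_int_of_nat)
  have "q powi (int (2 * i) - int d) = q ^ (2 * i) * inverse (q ^ d)"
    using power_int_diff[of q "int (2 * i)" "int d"] q by (simp only: p divide_inverse) simp
  moreover have "q powi (int d - int (2 * i)) = q ^ d * inverse (q ^ (2 * i))"
    using power_int_diff[of q "int d" "int (2 * i)"] q by (simp only: p divide_inverse) simp
  moreover have "2 * int i - int d = int (2 * i) - int d" "int d - 2 * int i = int d - int (2 * i)"
    by simp_all
  ultimately show ?thesis by (simp only: th_def mult.assoc)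
qed

text \<open>Using u v* and v u*, the difference of the two scalars is a combination of
  eigenvalue gaps; the alpha-dependent terms cancel.\<close>
lemma theta_gap_identity:
  fixes q a b c as bs cs u v us vs :: "'a::field"
  assumes q: "q \<noteq> 0" and d: "1 \<le> d"
    and uvs: "u * vs = - b * bs * inverse q * (q - inverse q) ^ 2"
    and vus: "v * us = - c * cs * inverse q * (q - inverse q) ^ 2"
  defines "t \<equiv> th q d a b c" and "s \<equiv> th q d as bs cs"
  shows "(u * vs - v * us) * (q ^ d * qint q d - qgeom q d)
    = (s 1 - s d) * (t d - t (d - 1)) + (s 0 - s 1) * (t 0 - t (d - 1))"
proof -
  define Q where "Q = q ^ d"
  have Q: "Q \<noteq> 0" using q by (simp add: Q_def)
  have iQ: "inverse q ^ d = inverse Q" by (simp add: Q_def power_inverse)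
  have QQ: "q ^ (2 * d) = Q * Q"
    by (simp add: Q_def power_mult mult.commute[of 2 d] power2_eq_square)
  have "2 * (d - 1) + 2 = 2 * d" using d by simp
  then have "q ^ (2 * (d - 1)) * q ^ 2 = q ^ (2 * d)" by (metis power_add)
  then have QQ1: "q ^ (2 * (d - 1)) = Q * Q * inverse q ^ 2"
    using q unfolding QQ by (simp add: field_simps)
  have t0: "t 0 = a + b * inverse Q + c * Q" unfolding t_def th_pow[OF q] by (simp add: Q_def)
  have t1: "t (d - 1) = a + b * Q * inverse q ^ 2 + c * q ^ 2 * inverse Q"
    unfolding t_def th_pow[OF q] QQ1 using q Q by (simp add: Q_def[symmetric] field_simps)
  have td: "t d = a + b * Q + c * inverse Q"
    unfolding t_def th_pow[OF q] QQ using Q by (simp add: Q_def[symmetric] field_simps)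
  have s0: "s 0 = as + bs * inverse Q + cs * Q" unfolding s_def th_pow[OF q] by (simp add: Q_def)
  have s1: "s 1 = as + bs * q ^ 2 * inverse Q + cs * Q * inverse q ^ 2"
    unfolding s_def th_pow[OF q] by (simp add: Q_def power_inverse)
  have sd: "s d = as + bs * Q + cs * inverse Q"
    unfolding s_def th_pow[OF q] QQ using Q by (simp add: Q_def[symmetric] field_simps)
  have "(u * vs - v * us) * (Q * qint q d - qgeom q d)
      = (c * cs - b * bs) * inverse q * (q - inverse q)
          * (Q * ((q - inverse q) * qint q d) - (q - inverse q) * qgeom q d)"
    unfolding uvs vus by (simp add: power2_eq_square algebra_simps)
  also have "\<dots> = (c * cs - b * bs) * inverse q * (q - inverse q)
          * (Q * (Q - inverse Q) - (q ^ 2 - q ^ 2 * inverse Q ^ 2))"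
    using qint_closed[OF q, of d] qgeom_closed[OF q, of d] iQ
    by (simp add: Q_def power_mult[symmetric] mult.commute[of 2 d] power_mult)
  also have "\<dots> = (s 1 - s d) * (t d - t (d - 1)) + (s 0 - s 1) * (t 0 - t (d - 1))"
    unfolding s1 sd td t1 s0 t0 using q Q by (simp add: field_simps) algebra
  finally show ?thesis by (simp add: Q_def)
qed

lemma scalar_rearrange:
  fixes K Z s0 s1 sd t0 t1 td :: "'a::field"
  assumes "K - Z = (s1 - sd) * (td - t1) + (s0 - s1) * (t0 - t1)" and "td \<noteq> t1"
  shows "s1 - (Z + (s0 - s1) * (t0 - t1)) / (t1 - td) = sd + K / (td - t1)"
proof -
  have K: "K = Z + (s0 - s1) * (t0 - t1) + (s1 - sd) * (td - t1)"
    using assms(1) by (simp add: algebra_simps)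
  have "t1 - td \<noteq> 0" "td - t1 \<noteq> 0" using assms(2) by auto
  then show ?thesis unfolding K by (simp add: field_simps)
qed

theorem lemma9p8:
  fixes q a b c as bs cs u v us vs zeta1 :: "'a::field"
    and d :: nat and als :: "'a list"
  assumes alg_closed: "\<forall>p :: 'a poly. degree p \<ge> 1 \<longrightarrow> (\<exists>z. poly p z = 0)"
    and d1: "d \<ge> 1"
    and nz: "q \<noteq> 0" "b \<noteq> 0" "c \<noteq> 0" "bs \<noteq> 0" "cs \<noteq> 0"
    and q2: "q ^ 2 \<noteq> 1" "q ^ 2 \<noteq> -1"
    and th_dist: "inj_on (th q d a b c) {0..d}"
    and ths_dist: "inj_on (th q d as bs cs) {0..d}"
    and len: "length als = d"
    and al_nz: "\<forall>al \<in> set als. al \<noteq> 0"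
    and uvs: "u * vs = - b * bs * inverse q * (q - inverse q) ^ 2"
    and vus: "v * us = - c * cs * inverse q * (q - inverse q) ^ 2"
    and zeta1: "\<forall>w. length w = d \<longrightarrow>
        omult d (Lop q als us vs) (Rop q als u v) w (replicate d True)
          = zeta1 * oid w (replicate d True)"
  shows
   "let A = Aop q als a b c (Rop q als u v);
        As = Aop q als as bs cs (Lop q als us vs);
        \<theta> = th q d a b c; \<theta>s = th q d as bs cs;
        E = idem d A \<theta>; Es = idem d As \<theta>s;
        a0 = \<theta> 0 + zeta1 * inverse (\<theta>s 0 - \<theta>s 1);
        asd = \<theta>s 1 - (zeta1 + (\<theta>s 0 - \<theta>s 1) * (\<theta> 0 - \<theta> (d - 1))) / (\<theta> (d - 1) - \<theta> d)
    in opeq d (omult d (omult d (Es 0) A) (Es 0)) (\<lambda>w' w. a0 * Es 0 w' w)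
     \<and> opeq d (omult d (omult d (E d) As) (E d)) (\<lambda>w' w. asd * E d w' w)"
proof -
  define R L where "R = Rop q als u v" and "L = Lop q als us vs"
  define \<theta> \<theta>s where "\<theta> = th q d a b c" and "\<theta>s = th q d as bs cs"
  let ?X = "replicate d True" and ?Y = "replicate d False"
  note A = Aop_diag_plus[OF nz(1) len, of a b c R, folded \<theta>_def]
  note As = Aop_diag_plus[OF nz(1) len, of as bs cs L, folded \<theta>s_def]
  note R = Rop_raising[OF len, of q u v, folded R_def]
  note L = Lop_lowering[OF len, of q us vs, folded L_def]
  have zeta: "omult d L R w ?X = zeta1 * oid w ?X" if "w \<in> words d" for w
    using zeta1 that by (simp add: words_def L_def R_def)
  note top = top_sandwich[OF A R As L ths_dist[folded \<theta>s_def] d1 zeta]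
  note bottom = bottom_sandwich[OF A R As L th_dist[folded \<theta>_def] d1]
  text \<open>Rewrite the scalar of (ii): R L on the bottom word minus zeta_1 is an eigenvalue identity.\<close>
  have "omult d R L ?Y ?Y - zeta1 = (u * vs - v * us) * (q ^ d * qint q d - qgeom q d)"
    using LR_top[OF nz(1) len al_nz] RL_bottom[OF nz(1) len al_nz] zeta[of ?X]
    by (simp add: R_def L_def oid_def algebra_simps)
  moreover have "\<theta> d \<noteq> \<theta> (d - 1)"
    using inj_onD[OF th_dist, of d "d - 1"] d1 by (auto simp: \<theta>_def)
  ultimately have "\<theta>s 1 - (zeta1 + (\<theta>s 0 - \<theta>s 1) * (\<theta> 0 - \<theta> (d - 1))) / (\<theta> (d - 1) - \<theta> d)
      = \<theta>s d + omult d R L ?Y ?Y / (\<theta> d - \<theta> (d - 1))"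
    using theta_gap_identity[OF nz(1) d1 uvs vus] by (intro scalar_rearrange) (simp_all add: \<theta>_def \<theta>s_def)
  with top bottom show ?thesis
    unfolding Let_def R_def[symmetric] L_def[symmetric] \<theta>_def[symmetric] \<theta>s_def[symmetric]
    by (simp add: divide_inverse)
qed

end
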